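(* Consider a power network with $N$ buses and $n$ generators (synchronous or converter-based), $n \le N$, each generator connected to a distinct bus. Let $\mathbf{B}_{\mathrm{BB}} \in \mathbb{R}^{N\times N}$ and $\mathbf{B}_{\mathrm{BG}} \in \mathbb{R}^{N\times n}$ be as described in the context, and suppose the bus frequency variations $\Delta\boldsymbol{\omega}_B(t)\in\mathbb{R}^N$ and generator rotor speed deviations $\Delta\boldsymbol{\omega}_G(t)\in\mathbb{R}^n$ satisfy, for all $t \ge 0$, $$\Delta\boldsymbol{\omega}_B(t) = -\mathbf{B}_{\mathrm{BB}}^{+}\,\mathbf{B}_{\mathrm{BG}}\,\Delta\boldsymbol{\omega}_G(t).$$ Suppose the generator connected to the $i$-th network bus is the one inducing forced oscillations, i.e. the rotor speed deviations of all other generators are identically zero. Then for all $t\ge 0$ and all $j \in \{1,\ldots,N\}$ with $j \ne i$, $$|\Delta\boldsymbol{\omega}_{B,i}(t)| \ge |\Delta\boldsymbol{\omega}_{B,j}(t)|,$$ where $\Delta\boldsymbol{\omega}_{B,k}(t)$ denotes the $k$-th component of $\Delta\boldsymbol{\omega}_B(t)$.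
   Context: This is the noise-free "frequency divider" model of bus frequencies. $\mathbf{H}^+$ denotes the Moore–Penrose pseudo-inverse of a matrix $\mathbf{H}$. $\mathbf{B}_{\mathrm{BB}} = \mathbf{B}_{\mathrm{BUS}} + \mathbf{B}_{\mathrm{GG}}$, where $\mathbf{B}_{\mathrm{BUS}}\in\mathbb{R}^{N\times N}$ is the imaginary part of the network admittance matrix and $\mathbf{B}_{\mathrm{GG}}\in\mathbb{R}^{N\times N}$ is diagonal with $(k,k)$ entry equal to the inverse of the internal reactance of the machine at bus $k$ if a machine is connected there and $0$ otherwise. $\mathbf{B}_{\mathrm{BG}}\in\mathbb{R}^{N\times n}$ encodes susceptances between generators and the buses they are connected to: the column of $\mathbf{B}_{\mathrm{BG}}$ corresponding to a generator connected to bus $k$ is zero except for a single strictly positive entry in row $k$. Standing facts assumed in the paper about $\mathbf{B}_{\mathrm{BB}}^+$: every entry is nonnegative, and it is diagonally dominant both row-wise and column-wise (the magnitude of each diagonal entry is at least the sum of the magnitudes of the other entries in its row, and likewise in its column). *)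

theory Defs
  imports "HOL-Analysis.Analysis"
begin

definition is_mp_pinv :: "real^'m^'n \<Rightarrow> real^'n^'m \<Rightarrow> bool" where
  "is_mp_pinv A X \<longleftrightarrow>
     A ** X ** A = A \<and> X ** A ** X = X \<and>
     transpose (A ** X) = A ** X \<and> transpose (X ** A) = X ** A"

definition mp_pinv :: "real^'m^'n \<Rightarrow> real^'n^'m" where
  "mp_pinv A = (THE X. is_mp_pinv A X)"

end

theory Submission
  imports Defs
begin

text \<open>If only the generator at bus \<open>i\<close> oscillates, then \<open>B\<^sub>B\<^sub>G \<Delta>\<omega>\<^sub>G\<close> is supported
  at bus \<open>i\<close>, so \<open>\<Delta>\<omega>\<^sub>B\<close> is a multiple of the \<open>i\<close>-th column of \<open>B\<^sub>B\<^sub>B\<^sup>+\<close>. Column diagonal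
  dominance makes the diagonal entry the largest entry of that column in absolute value.\<close>

lemma matrix_vector_mult_single_support:
  fixes A :: "'a::comm_ring_1^'n^'m"
  assumes "\<And>l. l \<noteq> r \<Longrightarrow> x $ l = 0"
  shows "(A *v x) $ k = A $ k $ r * x $ r"
proof -
  have "(A *v x) $ k = (\<Sum>l\<in>UNIV. A $ k $ l * x $ l)"
    by (simp add: matrix_vector_mult_def)
  also have "\<dots> = A $ k $ r * x $ r"
    using assms by (subst sum.remove[of UNIV r]) (auto intro!: sum.neutral)
  finally show ?thesis .
qed

lemma abs_entry_le_diag_if_col_diag_dominant:
  fixes A :: "real^'n^'n"
  assumes dominant: "(\<Sum>l\<in>UNIV - {i}. \<bar>A $ l $ i\<bar>) \<le> \<bar>A $ i $ i\<bar>"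
  shows "\<bar>A $ j $ i\<bar> \<le> \<bar>A $ i $ i\<bar>"
proof (cases "j = i")
  case False
  then have "\<bar>A $ j $ i\<bar> \<le> (\<Sum>l\<in>UNIV - {i}. \<bar>A $ l $ i\<bar>)"
    by (intro member_le_sum) auto
  with dominant show ?thesis by linarith
qed simp

lemma abs_matrix_vector_mult_le_at_support:
  fixes A :: "real^'n^'n"
  assumes "(\<Sum>l\<in>UNIV - {i}. \<bar>A $ l $ i\<bar>) \<le> \<bar>A $ i $ i\<bar>"
    and "\<And>l. l \<noteq> i \<Longrightarrow> x $ l = 0"
  shows "\<bar>(A *v x) $ j\<bar> \<le> \<bar>(A *v x) $ i\<bar>"
proof -
  have "\<bar>A $ j $ i\<bar> * \<bar>x $ i\<bar> \<le> \<bar>A $ i $ i\<bar> * \<bar>x $ i\<bar>"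
    using abs_entry_le_diag_if_col_diag_dominant[OF assms(1)] by (rule mult_right_mono) simp
  then show ?thesis
    by (simp add: matrix_vector_mult_single_support[OF assms(2)] abs_mult)
qed

theorem proposition1:
  fixes B_BUS B_GG B_BB :: "real^'N^'N"
    and B_BG :: "real^'n^'N"
    and bus :: "'n \<Rightarrow> 'N"
    and X :: "'n \<Rightarrow> real"
    and dwB :: "real \<Rightarrow> real^'N"
    and dwG :: "real \<Rightarrow> real^'n"
    and g0 :: 'n and i :: 'N
  assumes bus_inj: "inj bus"
    and BGG_offdiag: "\<And>k l. k \<noteq> l \<Longrightarrow> B_GG $ k $ l = 0"
    and BGG_gen: "\<And>g. B_GG $ bus g $ bus g = 1 / X g"
    and BGG_nogen: "\<And>k. k \<notin> range bus \<Longrightarrow> B_GG $ k $ k = 0"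
    and BBB: "B_BB = B_BUS + B_GG"
    and BBG_pos: "\<And>g. B_BG $ bus g $ g > 0"
    and BBG_zero: "\<And>g k. k \<noteq> bus g \<Longrightarrow> B_BG $ k $ g = 0"
    and pinv_nonneg: "\<And>k l. mp_pinv B_BB $ k $ l \<ge> 0"
    and pinv_row_dd: "\<And>k. \<bar>mp_pinv B_BB $ k $ k\<bar> \<ge> (\<Sum>l\<in>UNIV - {k}. \<bar>mp_pinv B_BB $ k $ l\<bar>)"
    and pinv_col_dd: "\<And>k. \<bar>mp_pinv B_BB $ k $ k\<bar> \<ge> (\<Sum>l\<in>UNIV - {k}. \<bar>mp_pinv B_BB $ l $ k\<bar>)"
    and model: "\<And>t. t \<ge> 0 \<Longrightarrow> dwB t = - ((mp_pinv B_BB ** B_BG) *v dwG t)"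
    and gen_at_i: "bus g0 = i"
    and forced: "\<And>t g. t \<ge> 0 \<Longrightarrow> g \<noteq> g0 \<Longrightarrow> dwG t $ g = 0"
  shows "\<forall>t \<ge> 0. \<forall>j. j \<noteq> i \<longrightarrow> \<bar>dwB t $ i\<bar> \<ge> \<bar>dwB t $ j\<bar>"
proof (intro allI impI)
  fix t :: real and j :: 'N
  assume t: "t \<ge> 0"
  let ?injection = "B_BG *v dwG t"
  have injection_off_i: "?injection $ k = 0" if "k \<noteq> i" for k
    using that gen_at_i BBG_zero
    by (simp add: matrix_vector_mult_single_support[OF forced[OF t]])
  have "dwB t = - (mp_pinv B_BB *v ?injection)"
    by (simp add: model[OF t] matrix_vector_mul_assoc)
  then show "\<bar>dwB t $ i\<bar> \<ge> \<bar>dwB t $ j\<bar>"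
    using abs_matrix_vector_mult_le_at_support[OF pinv_col_dd injection_off_i] by simp
qed

end
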